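(* Let $p$ be a prime and $f\ge1$. Suppose $r_0,\dots,r_{f-1}$ are integers in $[-p,p]$ satisfying $\sum_{i=0}^{f-1}p^{f-1-i}r_i\equiv0\pmod{p^f-1}$. Then one of the following holds: (1) $(r_0,\dots,r_{f-1})=\pm(p-1,\dots,p-1)$; (2) the list $r_0,\dots,r_{f-1}$, regarded cyclically (indices mod $f$), can be partitioned into blocks of consecutive entries, each block being either all zeros $(0,\dots,0)$ or of the form $\epsilon(-1,p-1,\dots,p-1,p)$ (i.e. $r_i=-\epsilon$, $r_{i+1}=\dots=r_{i+j-1}=\epsilon(p-1)$, $r_{i+j}=\epsilon p$ for some $j\ge1$, with possibly no entries equal to $\epsilon(p-1)$), where the sign $\epsilon\in\{\pm1\}$ may depend on the block; or (3) $p=2$ and $(r_0,\dots,r_{f-1})=\pm(2,\dots,2)$. *)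

theory Defs
  imports Main "HOL-Computational_Algebra.Primes"
begin

text \<open>A vector (r_0,...,r_{f-1}) is encoded as a function r :: nat => int; only the
values at indices i < f matter. Cyclic indices are taken mod f.\<close>

definition good_block :: "nat \<Rightarrow> nat \<Rightarrow> (nat \<Rightarrow> int) \<Rightarrow> nat \<Rightarrow> nat \<Rightarrow> bool" where
  "good_block p f r s L \<longleftrightarrow>
     (\<forall>k<L. r ((s + k) mod f) = 0) \<or>
     (\<exists>\<epsilon>::int. (\<epsilon> = 1 \<or> \<epsilon> = -1) \<and> L \<ge> 2 \<and>
        r (s mod f) = - \<epsilon> \<and>
        (\<forall>k. 0 < k \<and> k < L - 1 \<longrightarrow> r ((s + k) mod f) = \<epsilon> * (int p - 1)) \<and>
        r ((s + (L - 1)) mod f) = \<epsilon> * int p)"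

definition cyclic_block_partition :: "nat \<Rightarrow> nat \<Rightarrow> (nat \<Rightarrow> int) \<Rightarrow> bool" where
  "cyclic_block_partition p f r \<longleftrightarrow>
     (\<exists>t Ls. (\<forall>L\<in>set Ls. L \<ge> 1) \<and> sum_list Ls = f \<and>
        (\<forall>i<length Ls. good_block p f r (t + sum_list (take i Ls)) (Ls ! i)))"

end

theory Submission
  imports Defs
begin

(* Write the divisibility hypothesis as
     sum_{i<f} p^(f-1-i) r_i = (p^f - 1) k
   and define carries c_0 = k, c_(j+1) = p c_j - r_j.  The closed form of c shows c_f = c_0,
   so D i = c (i mod f) is an f-periodic integer sequence with
     r_(i mod f) = p D_i - D_(i+1)        for all i.
   At a position where |D| is maximal, p |D| <= |D| + p, hence |D| <= 1, or p = 2 and |D| <= 2.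
   This leaves three cases, each settled by a rigidity statement:
   - some carry is +-2 (so p = 2): a carry +-2 forces the next carry to equal it, so D is
     constant and every digit is +-2;
   - no carry vanishes: a carry +-1 followed by a carry +-1 forces equality, so D = +-1
     is constant and the digits are all +-(p-1);
   - some carry vanishes: cutting the cycle at the zeros of D, each segment between
     consecutive zeros has carries of one sign e and yields the block e(-1, p-1, ..., p-1, p)
     (or the block (0) when the zeros are adjacent), giving a cyclic block partition. *)

section \<open>Carries\<close>

fun carry :: "int \<Rightarrow> int \<Rightarrow> (nat \<Rightarrow> int) \<Rightarrow> nat \<Rightarrow> int" where
  "carry P k r 0 = k"
| "carry P k r (Suc j) = P * carry P k r j - r j"

lemma carry_closed_form:
  "carry P k r j = P ^ j * k - (\<Sum>i<j. P ^ (j - 1 - i) * r i)"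
proof (induction j)
  case 0
  then show ?case by simp
next
  case (Suc j)
  have "(\<Sum>i<j. P ^ (j - i) * r i) = (\<Sum>i<j. P * (P ^ (j - 1 - i) * r i))"
  proof (rule sum.cong)
    fix i assume "i \<in> {..<j}"
    then have "j - i = Suc (j - 1 - i)" by auto
    then show "P ^ (j - i) * r i = P * (P ^ (j - 1 - i) * r i)" by simp
  qed simp
  then have "(\<Sum>i<Suc j. P ^ (Suc j - 1 - i) * r i) = P * (\<Sum>i<j. P ^ (j - 1 - i) * r i) + r j"
    by (simp add: sum_distrib_left)
  then show ?case
    using Suc by (simp add: right_diff_distrib mult.assoc)
qed

text \<open>The divisibility hypothesis is exactly what makes the carries periodic: the digits are
  the cyclic coboundary r_i = P D_i - D_(i+1) of an f-periodic integer sequence D.\<close>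
lemma periodic_carries_exist:
  fixes P :: int and r :: "nat \<Rightarrow> int"
  assumes "f \<ge> 1" and "(P ^ f - 1) dvd (\<Sum>i<f. P ^ (f - 1 - i) * r i)"
  obtains D :: "nat \<Rightarrow> int"
  where "\<And>i. D (i mod f) = D i" and "\<And>i. r (i mod f) = P * D i - D (Suc i)"
proof -
  obtain k where k: "(\<Sum>i<f. P ^ (f - 1 - i) * r i) = (P ^ f - 1) * k"
    using assms(2) by (auto elim: dvdE)
  define c where "c = carry P k r"
  have c_period: "c f = c 0"
    using carry_closed_form[of P k r f] k by (simp add: c_def algebra_simps)
  have c_mod_Suc: "c (Suc i mod f) = c (Suc (i mod f))" for i
  proof (cases "Suc (i mod f) = f")
    case True
    then have "Suc i mod f = 0" by (metis mod_Suc)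
    then show ?thesis using True c_period by simp
  next
    case False
    then show ?thesis by (metis mod_Suc)
  qed
  show ?thesis
  proof (rule that[of "\<lambda>i. c (i mod f)"])
    fix i
    show "c (i mod f mod f) = c (i mod f)" by simp
    show "r (i mod f) = P * c (i mod f) - c (Suc i mod f)"
      using c_mod_Suc[of i] by (simp add: c_def)
  qed
qed

lemma periodic_abs_max:
  fixes D :: "nat \<Rightarrow> int"
  assumes "f \<ge> 1" and periodic: "\<And>i. D (i mod f) = D i"
  obtains j where "\<And>i. \<bar>D i\<bar> \<le> \<bar>D j\<bar>"
proof -
  let ?A = "(\<lambda>i. \<bar>D i\<bar>) ` {..<f}"
  have "?A \<noteq> {}" using assms(1) by (simp add: lessThan_empty_iff)
  then have "Max ?A \<in> ?A" by (intro Max_in) auto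
  then obtain j where j: "j < f" "\<bar>D j\<bar> = Max ?A" by auto
  have "\<bar>D i\<bar> \<le> \<bar>D j\<bar>" for i
  proof -
    have "\<bar>D (i mod f)\<bar> \<le> Max ?A"
      using assms(1) by (intro Max_ge) auto
    then show ?thesis using periodic[of i] j(2) by simp
  qed
  then show ?thesis by (rule that)
qed

text \<open>At a carry of maximal size, P |D_j| = |r_j + D_(j+1)| <= P + |D_j|.\<close>
lemma max_carry_bound:
  fixes P :: int and D :: "nat \<Rightarrow> int"
  assumes digit: "\<And>i. \<bar>P * D i - D (Suc i)\<bar> \<le> P"
    and max: "\<And>i. \<bar>D i\<bar> \<le> \<bar>D j\<bar>"
    and "P \<ge> 0"
  shows "(P - 1) * \<bar>D j\<bar> \<le> P"
proof -
  have "P * \<bar>D j\<bar> = \<bar>P * D j\<bar>" using \<open>P \<ge> 0\<close> by (simp add: abs_mult)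
  also have "\<dots> \<le> \<bar>P * D j - D (Suc j)\<bar> + \<bar>D (Suc j)\<bar>"
    by (metis abs_triangle_ineq diff_add_cancel)
  also have "\<dots> \<le> P + \<bar>D j\<bar>" using digit[of j] max[of "Suc j"] by simp
  finally show ?thesis by (simp add: left_diff_distrib)
qed

lemma carry_size:
  fixes P :: int and D :: "nat \<Rightarrow> int"
  assumes digit: "\<And>i. \<bar>P * D i - D (Suc i)\<bar> \<le> P"
    and max: "\<And>i. \<bar>D i\<bar> \<le> \<bar>D j\<bar>"
    and "P \<ge> 2"
  shows "\<bar>D i\<bar> \<le> 1 \<or> (P = 2 \<and> \<bar>D i\<bar> \<le> 2)"
proof (cases "\<bar>D j\<bar> \<ge> 2")
  case True
  have bound: "(P - 1) * \<bar>D j\<bar> \<le> P"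
    using max_carry_bound[OF digit max] \<open>P \<ge> 2\<close> by simp
  have "(P - 1) * 2 \<le> (P - 1) * \<bar>D j\<bar>"
    using True \<open>P \<ge> 2\<close> by (intro mult_left_mono) auto
  then have "(P - 1) * 2 \<le> P" using bound by (rule order_trans)
  then have "P = 2" using \<open>P \<ge> 2\<close> by (simp add: algebra_simps)
  then have "\<bar>D j\<bar> \<le> 2" using bound by simp
  then have "\<bar>D i\<bar> \<le> 2" using max[of i] by linarith
  then show ?thesis using \<open>P = 2\<close> by blast
next
  case False
  then have "\<bar>D i\<bar> \<le> 1" using max[of i] by linarith
  then show ?thesis by blast
qed

lemma periodic_carry_cases:
  fixes P :: int and D :: "nat \<Rightarrow> int"
  assumes "f \<ge> 1" and periodic: "\<And>i. D (i mod f) = D i"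
    and digit_bound: "\<And>i. \<bar>P * D i - D (Suc i)\<bar> \<le> P" and "P \<ge> 2"
  obtains (double) a where "P = 2" "\<bar>D a\<bar> = 2" "\<And>i. \<bar>D i\<bar> \<le> 2"
    | (unit) "\<And>i. \<bar>D i\<bar> = 1"
    | (vanishing) t where "D t = 0" "\<And>i. \<bar>D i\<bar> \<le> 1"
proof -
  obtain j where max: "\<And>i. \<bar>D i\<bar> \<le> \<bar>D j\<bar>"
    using periodic_abs_max[where D = D, OF assms(1) periodic] by blast
  have size: "\<bar>D i\<bar> \<le> 1 \<or> (P = 2 \<and> \<bar>D i\<bar> \<le> 2)" for i
    using carry_size[OF digit_bound max \<open>P \<ge> 2\<close>] .
  show ?thesis
  proof (cases "\<exists>a. \<bar>D a\<bar> = 2")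
    case True
    then obtain a where a: "\<bar>D a\<bar> = 2" by blast
    moreover have "P = 2" using size[of a] a by auto
    moreover have "\<bar>D i\<bar> \<le> 2" for i using size[of i] by auto
    ultimately show ?thesis using double by blast
  next
    case False
    have small: "\<bar>D i\<bar> \<le> 1" for i
    proof -
      have "\<bar>D i\<bar> \<noteq> 2" using False by blast
      then show ?thesis using size[of i] by linarith
    qed
    show ?thesis
    proof (cases "\<exists>t. D t = 0")
      case True
      then show ?thesis using small vanishing by blast
    next
      case False
      have "\<bar>D i\<bar> = 1" for i
      proof -
        have "D i \<noteq> 0" using False by blast
        then show ?thesis using small[of i] by linarith
      qed
      then show ?thesis by (rule unit)
    qed
  qed
qed

section \<open>Rigidity of carries\<close>

lemma unit_carry_persists:
  fixes P c c' :: int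
  assumes "\<bar>c\<bar> = 1" "\<bar>c'\<bar> = 1" "\<bar>P * c - c'\<bar> \<le> P" "P \<ge> 0"
  shows "c' = c"
proof -
  have "c = 1 \<or> c = -1" "c' = 1 \<or> c' = -1" using assms(1,2) by auto
  then show ?thesis using assms(3,4) by auto
qed

lemma double_carry_persists:
  fixes c c' :: int
  assumes "\<bar>c\<bar> = 2" "\<bar>c'\<bar> \<le> 2" "\<bar>2 * c - c'\<bar> \<le> 2"
  shows "c' = c"
proof -
  have "c = 2 \<or> c = -2" using assms(1) by auto
  then show ?thesis using assms(2,3) by auto
qed

lemma periodic_propagation:
  fixes D :: "nat \<Rightarrow> 'a"
  assumes "f \<ge> 1" and periodic: "\<And>i. D (i mod f) = D i"
    and start: "D a = v" and step: "\<And>i. D i = v \<Longrightarrow> D (Suc i) = v"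
  shows "D i = v"
proof -
  have forward: "D (a + n) = v" for n
    by (induction n) (simp_all add: start step)
  have "i + a * f \<ge> a" using \<open>f \<ge> 1\<close> by (simp add: trans_le_add2)
  then have "D (i + a * f) = v" using forward[of "i + a * f - a"] by simp
  moreover have "D (i + a * f) = D i" by (metis periodic mod_mult_self1)
  ultimately show ?thesis by simp
qed

lemma constant_carry_digits:
  fixes P v :: int
  assumes digit: "\<And>i. r (i mod f) = P * D i - D (Suc i)" and const: "\<And>i. D i = v"
  shows "\<forall>i<f. r i = P * v - v"
  using digit const by (metis mod_less)

lemma double_carries_constant:
  fixes D :: "nat \<Rightarrow> int"
  assumes "f \<ge> 1" and periodic: "\<And>i. D (i mod f) = D i"
    and digit_bound: "\<And>i. \<bar>2 * D i - D (Suc i)\<bar> \<le> 2"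
    and size: "\<And>i. \<bar>D i\<bar> \<le> 2" and a: "\<bar>D a\<bar> = 2"
  shows "D i = D a"
proof (rule periodic_propagation[where D = D, OF assms(1) periodic refl])
  fix i assume "D i = D a"
  then show "D (Suc i) = D a"
    using double_carry_persists[OF a size[of "Suc i"]] digit_bound[of i] by simp
qed

lemma unit_carries_constant:
  fixes P :: int and D :: "nat \<Rightarrow> int"
  assumes "f \<ge> 1" and periodic: "\<And>i. D (i mod f) = D i"
    and digit_bound: "\<And>i. \<bar>P * D i - D (Suc i)\<bar> \<le> P" and "P \<ge> 0"
    and unit: "\<And>i. \<bar>D i\<bar> = 1"
  shows "D i = D 0"
proof (rule periodic_propagation[where D = D, OF assms(1) periodic refl])
  fix i assume "D i = D 0"
  then show "D (Suc i) = D 0"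
    using unit_carry_persists[OF unit unit digit_bound[of i] \<open>P \<ge> 0\<close>] by simp
qed

section \<open>Blocks between zeros of the carry\<close>

text \<open>Between two consecutive zeros s and s + m of the carry, the digits form a good block:
  (0) if m = 1, and e(-1, p-1, ..., p-1, p) otherwise, e being the common sign of the carries.\<close>
lemma block_between_zeros:
  fixes D r :: "nat \<Rightarrow> int"
  assumes digit: "\<And>i. r (i mod f) = int p * D i - D (Suc i)"
    and digit_size: "\<And>i. \<bar>r (i mod f)\<bar> \<le> int p"
    and small_carry: "\<And>i. \<bar>D i\<bar> \<le> 1"
    and zeros: "D s = 0" "D (s + m) = 0" "0 < m"
    and nonzero: "\<And>k. 0 < k \<Longrightarrow> k < m \<Longrightarrow> D (s + k) \<noteq> 0"
  shows "good_block p f r s m"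
proof (cases "m = 1")
  case True
  then show ?thesis using zeros digit[of s] unfolding good_block_def by simp
next
  case False
  then have m2: "m \<ge> 2" using zeros(3) by simp
  define e where "e = D (s + 1)"
  have e: "\<bar>e\<bar> = 1" using nonzero[of 1] m2 small_carry[of "s + 1"] unfolding e_def by auto
  then have e_sign: "e = 1 \<or> e = -1" by auto
  have carries_const: "D (s + Suc k) = e" if "k < m - 1" for k
    using that
  proof (induction k)
    case 0
    then show ?case by (simp add: e_def)
  next
    case (Suc k)
    have "D (s + Suc k) = e" using Suc by simp
    moreover have "\<bar>D (s + Suc (Suc k))\<bar> = 1"
    proof -
      have "D (s + Suc (Suc k)) \<noteq> 0" using nonzero[of "Suc (Suc k)"] Suc.prems by simp
      then show ?thesis using small_carry[of "s + Suc (Suc k)"] by (auto simp: abs_if)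
    qed
    ultimately show ?case
      using unit_carry_persists[OF e] digit[of "s + Suc k"] digit_size[of "s + Suc k"] by simp
  qed
  have first: "r (s mod f) = - e" using digit[of s] zeros(1) e_def by simp
  have middle: "r ((s + k) mod f) = e * (int p - 1)" if k: "0 < k" "k < m - 1" for k
  proof -
    obtain k' where "k = Suc k'" using k by (cases k) auto
    then have "D (s + k) = e" "D (Suc (s + k)) = e"
      using carries_const[of k'] carries_const[of k] k by auto
    then show ?thesis using digit[of "s + k"] by (simp add: algebra_simps)
  qed
  have last: "r ((s + (m - 1)) mod f) = e * int p"
  proof -
    have "D (s + (m - 1)) = e"
      using carries_const[of "m - 2"] m2 by (simp add: Suc_diff_Suc numeral_2_eq_2)
    moreover have "Suc (s + (m - 1)) = s + m" using m2 by simp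
    ultimately show ?thesis using digit[of "s + (m - 1)"] zeros(2) by simp
  qed
  show ?thesis unfolding good_block_def using e_sign m2 first middle last by blast
qed

lemma blocks_between_zeros:
  fixes D r :: "nat \<Rightarrow> int"
  assumes digit: "\<And>i. r (i mod f) = int p * D i - D (Suc i)"
    and digit_size: "\<And>i. \<bar>r (i mod f)\<bar> \<le> int p"
    and small_carry: "\<And>i. \<bar>D i\<bar> \<le> 1"
  shows "D s = 0 \<Longrightarrow> D (s + n) = 0 \<Longrightarrow>
    \<exists>Ls. (\<forall>L\<in>set Ls. L \<ge> 1) \<and> sum_list Ls = n \<and>
        (\<forall>i<length Ls. good_block p f r (s + sum_list (take i Ls)) (Ls ! i))"
proof (induction n arbitrary: s rule: less_induct)
  case (less n)
  show ?case
  proof (cases "n = 0")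
    case True
    then show ?thesis by (intro exI[of _ "[]"]) simp
  next
    case False
    let ?zero = "\<lambda>k. 0 < k \<and> D (s + k) = 0"
    define m where "m = (LEAST k. ?zero k)"
    have n_zero: "?zero n" using False less.prems by simp
    have m: "?zero m" "m \<le> n"
      unfolding m_def using LeastI[of ?zero, OF n_zero] Least_le[of ?zero, OF n_zero] by auto
    have "good_block p f r s m"
    proof (rule block_between_zeros[OF digit digit_size small_carry less.prems(1)])
      show "D (s + m) = 0" "0 < m" using m by auto
      show "D (s + k) \<noteq> 0" if "0 < k" "k < m" for k
        using not_less_Least[of k ?zero] that unfolding m_def by auto
    qed
    moreover obtain Ls where Ls: "\<forall>L\<in>set Ls. L \<ge> 1" "sum_list Ls = n - m"
        "\<forall>i<length Ls. good_block p f r (s + m + sum_list (take i Ls)) (Ls ! i)"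
      using less.IH[of "n - m" "s + m"] m less.prems(2) by auto
    ultimately have "\<forall>i<length (m # Ls). good_block p f r (s + sum_list (take i (m # Ls))) ((m # Ls) ! i)"
      by (auto simp: add.assoc less_Suc_eq_0_disj)
    then show ?thesis using Ls m by (intro exI[of _ "m # Ls"]) auto
  qed
qed

text \<open>If some periodic carry vanishes, cutting the cycle at that zero gives a cyclic block
  partition of the digits.\<close>
lemma vanishing_carry_partition:
  fixes D r :: "nat \<Rightarrow> int"
  assumes periodic: "\<And>i. D (i mod f) = D i"
    and digit: "\<And>i. r (i mod f) = int p * D i - D (Suc i)"
    and digit_size: "\<And>i. \<bar>r (i mod f)\<bar> \<le> int p"
    and small_carry: "\<And>i. \<bar>D i\<bar> \<le> 1" and zero: "D t = 0"
  shows "cyclic_block_partition p f r"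
proof -
  have "D (t + f) = 0" using periodic zero by (metis mod_add_self2)
  then show ?thesis
    using blocks_between_zeros[OF digit digit_size small_carry zero]
    unfolding cyclic_block_partition_def by blast
qed

theorem mainTheorem9:
  fixes p f :: nat and r :: "nat \<Rightarrow> int"
  assumes "prime p" and "f \<ge> 1"
    and "\<forall>i<f. - int p \<le> r i \<and> r i \<le> int p"
    and "(int p ^ f - 1) dvd (\<Sum>i<f. int p ^ (f - 1 - i) * r i)"
  shows "(\<forall>i<f. r i = int p - 1) \<or> (\<forall>i<f. r i = - (int p - 1))
       \<or> cyclic_block_partition p f r
       \<or> (p = 2 \<and> ((\<forall>i<f. r i = 2) \<or> (\<forall>i<f. r i = -2)))"
proof -
  obtain D where periodic: "\<And>i. D (i mod f) = D i"
    and digit: "\<And>i. r (i mod f) = int p * D i - D (Suc i)"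
    using periodic_carries_exist[OF assms(2,4)] by blast
  have digit_size: "\<bar>r (i mod f)\<bar> \<le> int p" for i
  proof -
    have "i mod f < f" using assms(2) by simp
    then show ?thesis using assms(3) by (simp add: abs_le_iff minus_le_iff)
  qed
  have digit_bound: "\<bar>int p * D i - D (Suc i)\<bar> \<le> int p" for i
    using digit_size[of i] digit[of i] by simp
  have "int p \<ge> 2" using prime_ge_2_nat[OF assms(1)] by simp
  from periodic_carry_cases[where D = D, OF assms(2) periodic digit_bound this,
      case_names double unit vanishing]
  show ?thesis
  proof cases
    case (double a)
    then have "\<bar>2 * D i - D (Suc i)\<bar> \<le> 2" for i using digit_bound[of i] by simp
    then have "D i = D a" for i using double_carries_constant[OF assms(2) periodic _ double(3,2)] by blast
    moreover have "D a = 2 \<or> D a = -2" using double(2) by auto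
    ultimately show ?thesis using constant_carry_digits[OF digit, of "D a"] double(1) by auto
  next
    case unit
    have "D i = D 0" for i using unit_carries_constant[OF assms(2) periodic digit_bound _ unit] by simp
    moreover have "D 0 = 1 \<or> D 0 = -1" using unit[of 0] by auto
    ultimately show ?thesis using constant_carry_digits[OF digit, of "D 0"] by auto
  next
    case (vanishing t)
    then show ?thesis using vanishing_carry_partition[OF periodic digit digit_size] by blast
  qed
qed

end
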